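(* Let $r,t\ge2$ be integers and let $m$ be any integer with $m\ge\log_2 t$. Then there exists a $(k_{t-1},b_r)$ resolvable configuration with $k=r^m$.
   Context: A $(k_{t-1},b_r)$ configuration is a pair $(X,\mathcal A)$ where $X$ is a set of $k$ points and $\mathcal A$ is a collection of $b$ subsets of $X$ (lines) such that (1) each line contains exactly $r$ points, (2) each point belongs to exactly $t-1$ lines, and (3) every pair of distinct points belongs to at most one line. It is resolvable if moreover (4) the lines can be partitioned into $t-1$ parallel classes, where a parallel class is a set of lines partitioning $X$. *)

theory Defs
  imports Complex_Main
begin

definition configuration :: "'a set \<Rightarrow> 'a set set \<Rightarrow> nat \<Rightarrow> nat \<Rightarrow> nat \<Rightarrow> nat \<Rightarrow> bool" where
  "configuration X A k s b r \<longleftrightarrow>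
     finite X \<and> card X = k \<and> (\<forall>L\<in>A. L \<subseteq> X) \<and> finite A \<and> card A = b \<and>
     (\<forall>L\<in>A. card L = r) \<and>
     (\<forall>x\<in>X. card {L\<in>A. x \<in> L} = s) \<and>
     (\<forall>x\<in>X. \<forall>y\<in>X. x \<noteq> y \<longrightarrow> card {L\<in>A. x \<in> L \<and> y \<in> L} \<le> 1)"

definition parallel_class :: "'a set \<Rightarrow> 'a set set \<Rightarrow> bool" where
  "parallel_class X P \<longleftrightarrow>
     (\<forall>L\<in>P. L \<noteq> {}) \<and> \<Union>P = X \<and> (\<forall>L\<in>P. \<forall>M\<in>P. L \<noteq> M \<longrightarrow> L \<inter> M = {})"

definition resolvable_configuration :: "'a set \<Rightarrow> 'a set set \<Rightarrow> nat \<Rightarrow> nat \<Rightarrow> nat \<Rightarrow> nat \<Rightarrow> bool" where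
  "resolvable_configuration X A k s b r \<longleftrightarrow>
     configuration X A k s b r \<and>
     (\<exists>P :: nat \<Rightarrow> 'a set set.
        (\<forall>i<s. parallel_class X (P i)) \<and>
        (\<Union>i<s. P i) = A \<and>
        (\<forall>i<s. \<forall>j<s. i \<noteq> j \<longrightarrow> P i \<inter> P j = {}))"

end

theory Submission
  imports Defs "HOL-Library.FuncSet" "HOL-Library.Countable_Set" "HOL-Number_Theory.Cong"
begin

text \<open>Take as points the grid \<open>(\<int>/r\<int>)\<^sup>n\<close> with \<open>2\<^sup>n - 1 \<ge> t - 1\<close>, and as lines the sets
  \<open>{x + l d | l \<in> \<int>/r\<int>}\<close> for nonzero 0/1 vectors \<open>d\<close>. For a fixed direction these lines
  partition the grid, and lines with different directions meet at most once: at a coordinate where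
  the two directions differ, one line is constant and the other runs through all residues exactly
  once. Choosing \<open>t - 1\<close> distinct directions gives the parallel classes.\<close>

lemma card_lines_through_point:
  assumes "parallel_class X P" and "x \<in> X"
  shows "card {L \<in> P. x \<in> L} = 1"
proof -
  obtain L where "L \<in> P" "x \<in> L" using assms unfolding parallel_class_def by blast
  then have "{L \<in> P. x \<in> L} = {L}" using assms(1) unfolding parallel_class_def by blast
  then show ?thesis by simp
qed

lemma resolvable_configurationI:
  assumes fin: "finite X" and r2: "2 \<le> r"
    and cls: "\<And>j. j < s \<Longrightarrow> parallel_class X (P j)"
    and card_line: "\<And>j L. j < s \<Longrightarrow> L \<in> P j \<Longrightarrow> card L = r"
    and meet: "\<And>i j L M. i < s \<Longrightarrow> j < s \<Longrightarrow> i \<noteq> j \<Longrightarrow> L \<in> P i \<Longrightarrow> M \<in> P j \<Longrightarrow> card (L \<inter> M) \<le> 1"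
  shows "resolvable_configuration X (\<Union>j<s. P j) (card X) s (card (\<Union>j<s. P j)) r"
proof -
  define A where "A = (\<Union>j<s. P j)"
  have sub: "A \<subseteq> Pow X" using cls unfolding A_def parallel_class_def by blast
  then have finA: "finite A" using fin by (meson finite_Pow_iff rev_finite_subset)
  \<comment> \<open>a line common to two classes would meet itself in \<open>r \<ge> 2\<close> points\<close>
  have disj: "P i \<inter> P j = {}" if "i < s" "j < s" "i \<noteq> j" for i j
    using meet[OF that] card_line that r2 by fastforce
  have conf: "configuration X A (card X) s (card A) r"
    unfolding configuration_def
  proof (intro conjI ballI impI)
    show "finite X" "card X = card X" "finite A" "card A = card A" by (simp_all add: fin finA)
    show "L \<subseteq> X" "card L = r" if "L \<in> A" for L using that sub card_line unfolding A_def by auto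
    fix x y assume x: "x \<in> X"
    have "{L \<in> A. x \<in> L} = (\<Union>j<s. {L \<in> P j. x \<in> L})" unfolding A_def by blast
    also have "card \<dots> = (\<Sum>j<s. card {L \<in> P j. x \<in> L})"
      using disj finA by (intro card_UN_disjoint) (auto simp: A_def)
    finally show "card {L \<in> A. x \<in> L} = s" using card_lines_through_point[OF cls x] by simp
    assume "y \<in> X" "x \<noteq> y"
    have "L = M" if LM: "L \<in> A" "M \<in> A" "x \<in> L" "y \<in> L" "x \<in> M" "y \<in> M" for L M
    proof -
      obtain i j where ij: "i < s" "j < s" "L \<in> P i" "M \<in> P j" using LM unfolding A_def by blast
      have "finite L" using card_line[OF ij(1,3)] r2 card.infinite by fastforce
      then have "card {x, y} \<le> card (L \<inter> M)" using LM by (intro card_mono) auto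
      then have "i = j" using meet[OF ij(1,2) _ ij(3,4)] \<open>x \<noteq> y\<close> by fastforce
      then show ?thesis using cls[OF ij(1)] ij LM unfolding parallel_class_def by blast
    qed
    then show "card {L \<in> A. x \<in> L \<and> y \<in> L} \<le> 1"
      using card_le_Suc0_iff_eq[of "{L \<in> A. x \<in> L \<and> y \<in> L}"] finA by auto
  qed
  show ?thesis
    unfolding resolvable_configuration_def A_def[symmetric] using conf cls disj A_def by blast
qed

lemma card_filter_image:
  assumes "inj_on f A"
  shows "card {y \<in> f ` A. P y} = card {x \<in> A. P (f x)}"
proof -
  have "{y \<in> f ` A. P y} = f ` {x \<in> A. P (f x)}" by auto
  then show ?thesis using assms by (simp add: card_image inj_on_subset)
qed

lemma parallel_class_image:
  assumes inj: "inj_on g X" and P: "parallel_class X P"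
  shows "parallel_class (g ` X) (image g ` P)"
  unfolding parallel_class_def
proof (intro conjI ballI impI)
  have sub: "L \<subseteq> X" if "L \<in> P" for L using P that unfolding parallel_class_def by blast
  show "L \<noteq> {}" if "L \<in> image g ` P" for L using P that unfolding parallel_class_def by blast
  show "\<Union> (image g ` P) = g ` X" using P unfolding parallel_class_def by blast
  show "L \<inter> M = {}" if LM: "L \<in> image g ` P" "M \<in> image g ` P" "L \<noteq> M" for L M
  proof -
    obtain L' M' where "L' \<in> P" "M' \<in> P" "L = g ` L'" "M = g ` M'" using LM by blast
    moreover have "L' \<inter> M' = {}" using calculation LM(3) P unfolding parallel_class_def by blast
    ultimately show ?thesis using inj_on_image_Int[OF inj sub sub] by (metis image_empty)
  qed
qed

lemma resolvable_configuration_image: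
  assumes inj: "inj_on g X" and R: "resolvable_configuration X A k s b r"
  shows "resolvable_configuration (g ` X) (image g ` A) k s b r"
proof -
  have C: "configuration X A k s b r" using R unfolding resolvable_configuration_def by blast
  obtain P where cls: "\<forall>i<s. parallel_class X (P i)" and un: "(\<Union>i<s. P i) = A"
    and disj: "\<forall>i<s. \<forall>j<s. i \<noteq> j \<longrightarrow> P i \<inter> P j = {}"
    using R unfolding resolvable_configuration_def by blast
  have sub: "A \<subseteq> Pow X" using C unfolding configuration_def by blast
  have injA: "inj_on (image g) A" using inj_on_subset[OF inj_on_image_Pow[OF inj] sub] .
  have mem: "g x \<in> g ` L \<longleftrightarrow> x \<in> L" if "L \<in> A" "x \<in> X" for x L
    using that sub inj_on_image_mem_iff[OF inj] by blast
  have conf: "configuration (g ` X) (image g ` A) k s b r"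
    unfolding configuration_def
  proof (intro conjI ballI impI)
    show "finite (g ` X)" "finite (image g ` A)" "\<And>L. L \<in> image g ` A \<Longrightarrow> L \<subseteq> g ` X"
      using C sub unfolding configuration_def by auto
    show "card (g ` X) = k" "card (image g ` A) = b"
      using C card_image[OF inj] card_image[OF injA] unfolding configuration_def by simp_all
    show "card L = r" if "L \<in> image g ` A" for L
      using that C sub card_image[OF inj_on_subset[OF inj]] unfolding configuration_def by auto
    fix x y assume x: "x \<in> g ` X"
    then obtain x' where x': "x' \<in> X" "x = g x'" by blast
    have "card {L \<in> image g ` A. x \<in> L} = card {L \<in> A. x' \<in> L}"
      unfolding card_filter_image[OF injA] x' using mem[OF _ x'(1)] by (intro arg_cong[where f=card]) blast
    then show "card {L \<in> image g ` A. x \<in> L} = s" using C x' unfolding configuration_def by simp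
    assume "y \<in> g ` X" "x \<noteq> y"
    then obtain y' where y': "y' \<in> X" "y = g y'" "x' \<noteq> y'" using x' by blast
    have "card {L \<in> image g ` A. x \<in> L \<and> y \<in> L} = card {L \<in> A. x' \<in> L \<and> y' \<in> L}"
      unfolding card_filter_image[OF injA] x' y' using mem[OF _ x'(1)] mem[OF _ y'(1)]
      by (intro arg_cong[where f=card]) blast
    then show "card {L \<in> image g ` A. x \<in> L \<and> y \<in> L} \<le> 1"
      using C x' y' unfolding configuration_def by simp
  qed
  have PA: "P i \<subseteq> A" if "i < s" for i using un that by blast
  have "image g ` P i \<inter> image g ` P j = {}" if "i < s" "j < s" "i \<noteq> j" for i j
    using disj that inj_on_image_Int[OF injA PA[OF that(1)] PA[OF that(2)]] by simp
  moreover have "parallel_class (g ` X) (image g ` P i)" if "i < s" for i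
    using cls that parallel_class_image[OF inj] by blast
  moreover have "(\<Union>i<s. image g ` P i) = image g ` A" using un by blast
  ultimately show ?thesis
    unfolding resolvable_configuration_def using conf by (intro conjI exI[of _ "\<lambda>i. image g ` P i"]) auto
qed

lemma add_mod_cancel_less:
  fixes a l l' r :: nat
  assumes "(a + l) mod r = (a + l') mod r" "l < r" "l' < r"
  shows "l = l'"
proof -
  have "[a + l = a + l'] (mod r)" using assms(1) by (simp add: cong_def)
  then have "[l = l'] (mod r)" by (simp add: cong_add_lcancel_nat)
  then show ?thesis using assms(2,3) by (rule cong_less_modulus_unique_nat)
qed

definition grid :: "nat \<Rightarrow> nat \<Rightarrow> (nat \<Rightarrow> nat) set" where
  "grid n r = (\<Pi>\<^sub>E i\<in>{..<n}. {..<r})"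

definition translate :: "nat \<Rightarrow> nat \<Rightarrow> (nat \<Rightarrow> nat) \<Rightarrow> nat \<Rightarrow> (nat \<Rightarrow> nat) \<Rightarrow> nat \<Rightarrow> nat" where
  "translate n r x l d = (\<lambda>i\<in>{..<n}. (x i + l * d i) mod r)"

definition grid_line :: "nat \<Rightarrow> nat \<Rightarrow> (nat \<Rightarrow> nat) \<Rightarrow> (nat \<Rightarrow> nat) \<Rightarrow> (nat \<Rightarrow> nat) set" where
  "grid_line n r x d = (\<lambda>l. translate n r x l d) ` {..<r}"

definition binary_directions :: "nat \<Rightarrow> (nat \<Rightarrow> nat) set" where
  "binary_directions n = (\<Pi>\<^sub>E i\<in>{..<n}. {0, 1}) - {\<lambda>i\<in>{..<n}. 0}"

lemma card_grid: "card (grid n r) = r ^ n"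
  by (simp add: grid_def card_PiE)

lemma finite_grid: "finite (grid n r)"
  by (simp add: grid_def finite_PiE)

lemma finite_binary_directions: "finite (binary_directions n)"
  by (simp add: binary_directions_def finite_PiE)

lemma card_binary_directions: "card (binary_directions n) = 2 ^ n - 1"
proof -
  have "(\<lambda>i\<in>{..<n}. 0) \<in> (\<Pi>\<^sub>E i\<in>{..<n}. {0, 1::nat})" by simp
  then show ?thesis
    unfolding binary_directions_def by (simp add: card_Diff_singleton finite_PiE card_PiE numeral_2_eq_2)
qed

lemma binary_direction_coord_1:
  assumes "d \<in> binary_directions n"
  obtains i where "i < n" "d i = 1"
proof -
  have d: "d \<in> (\<Pi>\<^sub>E i\<in>{..<n}. {0, 1})" "d \<noteq> (\<lambda>i\<in>{..<n}. 0)"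
    using assms unfolding binary_directions_def by auto
  then obtain i where "d i \<noteq> (\<lambda>i\<in>{..<n}. 0) i" by blast
  moreover have "i < n" using calculation d(1) PiE_arb[OF d(1)] by fastforce
  moreover have "d i \<in> {0, 1}" using \<open>i < n\<close> d(1) by blast
  ultimately show ?thesis using that by auto
qed

lemma translate_in_grid: "0 < r \<Longrightarrow> translate n r x l d \<in> grid n r"
  by (simp add: translate_def grid_def)

lemma translate_0: "x \<in> grid n r \<Longrightarrow> translate n r x 0 d = x"
  by (auto simp: translate_def grid_def PiE_iff extensional_def)

lemma translate_translate:
  "translate n r (translate n r x l d) u d = translate n r x ((l + u) mod r) d"
proof -
  have "((x i + l * d i) mod r + u * d i) mod r = (x i + (l + u) * d i) mod r" for i
    by (simp add: mod_add_left_eq add.assoc distrib_right)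
  also have "(x i + (l + u) * d i) mod r = (x i + (l + u) mod r * d i) mod r" for i
    by (metis mod_add_right_eq mod_mult_left_eq)
  finally show ?thesis by (auto simp: translate_def fun_eq_iff)
qed

lemma grid_line_subset: "0 < r \<Longrightarrow> grid_line n r x d \<subseteq> grid n r"
  unfolding grid_line_def using translate_in_grid by blast

lemma self_in_grid_line: "x \<in> grid n r \<Longrightarrow> 0 < r \<Longrightarrow> x \<in> grid_line n r x d"
  unfolding grid_line_def using translate_0[of x n r d] by force

lemma grid_line_subset_if_mem:
  assumes "y \<in> grid_line n r x d"
  shows "grid_line n r y d \<subseteq> grid_line n r x d"
proof
  fix z assume "z \<in> grid_line n r y d"
  then obtain u where "z = translate n r y u d" unfolding grid_line_def by auto
  moreover obtain l where "l < r" "y = translate n r x l d" using assms unfolding grid_line_def by auto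
  ultimately show "z \<in> grid_line n r x d" unfolding grid_line_def by (simp add: translate_translate)
qed

lemma grid_line_eq_if_mem:
  assumes x: "x \<in> grid n r" and y: "y \<in> grid_line n r x d"
  shows "grid_line n r y d = grid_line n r x d"
proof
  show "grid_line n r y d \<subseteq> grid_line n r x d" using grid_line_subset_if_mem[OF y] .
  obtain l where l: "l < r" "y = translate n r x l d" using y unfolding grid_line_def by auto
  have "(l + (r - l)) mod r = 0" using l by simp
  then have "translate n r y ((r - l) mod r) d = x"
    using l by (simp add: translate_translate translate_0[OF x] mod_add_right_eq)
  then have "x \<in> grid_line n r y d" using l unfolding grid_line_def by force
  then show "grid_line n r x d \<subseteq> grid_line n r y d" by (rule grid_line_subset_if_mem)
qed

lemma translate_param_inj:
  assumes "d \<in> binary_directions n" "translate n r x l d = translate n r x l' d" "l < r" "l' < r"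
  shows "l = l'"
proof -
  obtain i where i: "i < n" "d i = 1" using binary_direction_coord_1[OF assms(1)] .
  have "translate n r x l d i = translate n r x l' d i" using assms(2) by simp
  then have "(x i + l) mod r = (x i + l') mod r" using i by (simp add: translate_def)
  then show ?thesis using add_mod_cancel_less assms(3,4) by blast
qed

lemma card_grid_line: "d \<in> binary_directions n \<Longrightarrow> card (grid_line n r x d) = r"
  unfolding grid_line_def
  by (subst card_image) (auto intro: inj_onI dest: translate_param_inj)

lemma parallel_class_grid_lines:
  assumes "0 < r"
  shows "parallel_class (grid n r) ((\<lambda>x. grid_line n r x d) ` grid n r)"
  unfolding parallel_class_def
proof (intro conjI ballI impI)
  show "L \<noteq> {}" if "L \<in> (\<lambda>x. grid_line n r x d) ` grid n r" for L
    using that self_in_grid_line[OF _ assms] by blast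
  show "\<Union> ((\<lambda>x. grid_line n r x d) ` grid n r) = grid n r"
    using self_in_grid_line[OF _ assms] grid_line_subset[OF assms] by blast
  show "L \<inter> M = {}" if "L \<in> (\<lambda>x. grid_line n r x d) ` grid n r"
    "M \<in> (\<lambda>x. grid_line n r x d) ` grid n r" "L \<noteq> M" for L M
    using that grid_line_eq_if_mem by blast
qed

lemma translate_eq_translate_imp_base:
  assumes "x \<in> grid n r" "i < n" "d i = 1" "d' i = 0" "a < r"
    and "translate n r x a d = translate n r x b d'"
  shows "translate n r x a d = x"
proof -
  have "translate n r x a d i = translate n r x b d' i" using assms(6) by simp
  then have "(x i + a) mod r = (x i + 0) mod r" using assms(2-4) by (simp add: translate_def)
  then have "a = 0" using add_mod_cancel_less assms(5) by blast
  then show ?thesis using translate_0[OF assms(1)] by simp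
qed

lemma grid_lines_meet_only_at_base:
  assumes d: "d \<in> binary_directions n" and d': "d' \<in> binary_directions n" and "d \<noteq> d'"
    and x: "x \<in> grid n r" and q: "q \<in> grid_line n r x d" "q \<in> grid_line n r x d'"
  shows "q = x"
proof -
  obtain a where a: "a < r" "q = translate n r x a d" using q unfolding grid_line_def by auto
  obtain b where b: "b < r" "q = translate n r x b d'" using q unfolding grid_line_def by auto
  obtain i where i: "i < n" "d i \<noteq> d' i"
    using d d' \<open>d \<noteq> d'\<close> unfolding binary_directions_def by (metis DiffD1 PiE_ext lessThan_iff)
  have "d i \<in> {0, 1}" "d' i \<in> {0, 1}" using d d' i unfolding binary_directions_def by auto
  then consider "d i = 1" "d' i = 0" | "d i = 0" "d' i = 1" using i(2) by auto
  then show ?thesis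
    using translate_eq_translate_imp_base[OF x i(1) _ _ a(1), of d d' b]
      translate_eq_translate_imp_base[OF x i(1) _ _ b(1), of d' d a] a b by cases auto
qed

lemma card_grid_line_Int_le_1:
  assumes "d \<in> binary_directions n" "d' \<in> binary_directions n" "d \<noteq> d'" "0 < r"
    and "x \<in> grid n r" "y \<in> grid n r"
  shows "card (grid_line n r x d \<inter> grid_line n r y d') \<le> 1"
proof -
  have "q = p" if "p \<in> grid_line n r x d \<inter> grid_line n r y d'" "q \<in> grid_line n r x d \<inter> grid_line n r y d'"
    for p q
  proof -
    have p: "p \<in> grid n r" using that grid_line_subset[OF assms(4)] by blast
    have "grid_line n r x d = grid_line n r p d" "grid_line n r y d' = grid_line n r p d'"
      using that grid_line_eq_if_mem assms(5,6) by blast+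
    then show ?thesis using grid_lines_meet_only_at_base[OF assms(1-3) p] that by blast
  qed
  moreover have "finite (grid_line n r x d)" unfolding grid_line_def by simp
  ultimately show ?thesis using card_le_Suc0_iff_eq[of "grid_line n r x d \<inter> grid_line n r y d'"] by auto
qed

lemma grid_resolvable_configuration:
  assumes r: "2 \<le> r" and s: "s \<le> 2 ^ n - 1"
  shows "\<exists>A b. resolvable_configuration (grid n r) A (r ^ n) s b r"
proof -
  obtain dir where dir: "dir ` {..<s} \<subseteq> binary_directions n" "inj_on dir {..<s}"
    using card_le_inj[of "{..<s}" "binary_directions n"] s
    by (auto simp: card_binary_directions finite_binary_directions)
  define P where "P j = (\<lambda>x. grid_line n r x (dir j)) ` grid n r" for j
  have "resolvable_configuration (grid n r) (\<Union>j<s. P j) (card (grid n r)) s (card (\<Union>j<s. P j)) r"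
  proof (rule resolvable_configurationI[OF finite_grid r])
    show "parallel_class (grid n r) (P j)" for j
      unfolding P_def using parallel_class_grid_lines r by simp
    show "card L = r" if "j < s" "L \<in> P j" for j L
      using that dir card_grid_line unfolding P_def by auto
    show "card (L \<inter> M) \<le> 1" if "i < s" "j < s" "i \<noteq> j" "L \<in> P i" "M \<in> P j" for i j L M
    proof -
      have "dir i \<noteq> dir j" using that(1-3) dir(2) by (auto dest: inj_onD)
      moreover have "dir i \<in> binary_directions n" "dir j \<in> binary_directions n" using that(1,2) dir(1) by auto
      ultimately show ?thesis
        using that(4,5) r card_grid_line_Int_le_1[of "dir i" n "dir j" r] unfolding P_def by auto
    qed
  qed
  then show ?thesis unfolding card_grid by blast
qed

lemma le_two_power_if_log_le:
  fixes t :: nat and m :: int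
  assumes "0 < t" and "log 2 (real t) \<le> real_of_int m"
  shows "t \<le> 2 ^ nat m"
proof -
  have "0 \<le> log 2 (real t)" using assms(1) by simp
  then have "0 \<le> m" using assms(2) by linarith
  then have "log 2 (2 ^ nat m) = real_of_int m" by (simp add: log_nat_power)
  then have "log 2 (real t) \<le> log 2 (2 ^ nat m)" using assms(2) by simp
  then have "real t \<le> 2 ^ nat m" using assms(1) by (subst (asm) log_le_cancel_iff) auto
  then show ?thesis by (metis of_nat_le_iff of_nat_numeral of_nat_power)
qed

theorem lemma10:
  fixes r t :: nat and m :: int
  assumes "r \<ge> 2" and "t \<ge> 2" and "real_of_int m \<ge> log 2 (real t)"
  shows "\<exists>(X :: nat set) A b. resolvable_configuration X A (r ^ nat m) (t - 1) b r"
proof -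
  have "t - 1 \<le> 2 ^ nat m - 1" using le_two_power_if_log_le[of t m] assms(2,3) by simp
  then obtain A b where "resolvable_configuration (grid (nat m) r) A (r ^ nat m) (t - 1) b r"
    using grid_resolvable_configuration[OF assms(1)] by blast
  moreover have "inj_on (to_nat_on (grid (nat m) r)) (grid (nat m) r)"
    by (simp add: countable_finite finite_grid inj_on_to_nat_on)
  ultimately show ?thesis using resolvable_configuration_image by blast
qed

end
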